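(* Let $q=p^m$ with $p$ an odd prime and $m\ge 1$, let $f(x)=x^{q+2}$ on $\mathbb{F}_{q^2}$, and for $b\in\mathbb{F}_{q^2}$ let $\delta(b)=\#\{u\in\mathbb{F}_{q^2}:\ 2u^{q+1}+u^2=b\}$ (equivalently $\delta(b)=\delta_f(1,b+\tfrac14)$). Then for every $b\in\mathbb{F}_{q^2}^*$, $\delta(b)$ is even and $\delta(b)\le 4$.
   Context: $\delta_f(a,b)=\#\{x\in\mathbb{F}_{q^2}:\ f(x+a)-f(x)=b\}$. *)

theory Defs
  imports Main "HOL-Computational_Algebra.Primes"
begin

text \<open>For the field F_{q^2} (modelled as a finite field type 'a with CARD('a) = q^2),
  delta q b = number of u with 2 u^(q+1) + u^2 = b.\<close>
definition delta :: "nat \<Rightarrow> 'a::{field,finite} \<Rightarrow> nat" where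
  "delta q b = card {u :: 'a. 2 * u ^ (q + 1) + u ^ 2 = b}"

end

theory Submission
  imports Defs "HOL-Computational_Algebra.Polynomial" "HOL-Number_Theory.Residues"
begin

(* The map u -> -u is a fixed-point-free involution of the solution set (u = 0 is excluded
   by b \<noteq> 0, the characteristic is odd and q + 1 is even), so delta is even.
   For the bound, N = u^(q+1) is fixed by the Frobenius x -> x^q. Raising u^2 = b - 2N to the
   q-th power gives (u^2)^q = b^q - 2N, hence N^2 = (u^2)^q u^2 = (b^q - 2N)(b - 2N): N is a root
   of the quadratic 3N^2 - 2(b + b^q)N + b^(q+1), which is nonzero as b \<noteq> 0. Each of its at
   most two roots N yields at most two square roots u of b - 2N. *)

lemma power_card_eq_self:
  fixes x :: "'a :: {field,finite}"
  shows "x ^ card (UNIV :: 'a set) = x"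
proof (cases "x = 0")
  case False
  define G :: "'a monoid" where "G = \<lparr>carrier = UNIV - {0 :: 'a}, monoid.mult = (*), one = 1\<rparr>"
  have "group G"
  proof (rule groupI)
    show "\<exists>y \<in> carrier G. y \<otimes>\<^bsub>G\<^esub> z = \<one>\<^bsub>G\<^esub>" if "z \<in> carrier G" for z
      using that by (intro bexI[of _ "inverse z"]) (auto simp: G_def)
  qed (auto simp: G_def mult.assoc)
  have pow: "y [^]\<^bsub>G\<^esub> n = y ^ n" for y :: 'a and n :: nat
    by (induction n) (simp_all add: G_def)
  have "x ^ (card (UNIV :: 'a set) - 1) = 1"
    using group.pow_order_eq_1[OF \<open>group G\<close>, of x] False
    by (simp add: pow order_def card_Diff_singleton) (simp add: G_def)
  moreover have "Suc (card (UNIV :: 'a set) - 1) = card (UNIV :: 'a set)"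
    using finite_UNIV_card_ge_0 by (metis Suc_pred' finite)
  ultimately show ?thesis
    by (metis power_Suc mult_1_right)
qed (simp add: finite_UNIV_card_ge_0)

lemma prime_CHAR_finite_field: "prime CHAR('a :: {field,finite})"
  by (rule prime_CHAR_semidom) (simp add: finite_imp_CHAR_pos)

lemma CHAR_eq_if_card_eq_prime_power:
  assumes "prime p" and "card (UNIV :: 'a :: {field,finite} set) = p ^ k"
  shows "CHAR('a) = p"
proof -
  have "CHAR('a) dvd p ^ k"
    using CHAR_dvd_CARD[where 'a = 'a] assms(2) by simp
  then have "CHAR('a) dvd p"
    using prime_CHAR_finite_field prime_dvd_power by blast
  then show ?thesis
    using prime_CHAR_finite_field[where 'a = 'a] assms(1) by (simp add: primes_dvd_imp_eq)
qed

lemma card_quadratic_roots_le_2: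
  fixes a b c :: "'a :: {comm_ring_1,ring_no_zero_divisors}"
  assumes "(a, b, c) \<noteq> (0, 0, 0)"
  shows "card {x. a * x\<^sup>2 + b * x + c = 0} \<le> 2"
proof -
  have "{x. a * x\<^sup>2 + b * x + c = 0} = {x. poly [:c, b, a:] x = 0}"
    by (simp add: algebra_simps power2_eq_square)
  also have "card \<dots> \<le> degree [:c, b, a:]"
    by (rule card_poly_roots_bound) (use assms in auto)
  also have "\<dots> \<le> 2"
    by simp
  finally show ?thesis .
qed

lemma card_square_roots_le_2:
  fixes c :: "'a :: {comm_ring_1,ring_no_zero_divisors}"
  shows "card {x. x\<^sup>2 = c} \<le> 2"
  using card_quadratic_roots_le_2[of 1 0 "- c"] by simp

lemma even_card_if_fixpoint_free_involution:
  assumes "finite X"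
    and "\<And>x. x \<in> X \<Longrightarrow> h x \<in> X" "\<And>x. x \<in> X \<Longrightarrow> h (h x) = x" "\<And>x. x \<in> X \<Longrightarrow> h x \<noteq> x"
  shows "even (card X)"
proof -
  define P where "P = (\<lambda>x. {x, h x}) ` X"
  have "\<Union>P = X"
    using assms(2) by (auto simp: P_def)
  moreover have "2 * card P = card (\<Union>P)"
  proof (rule card_partition)
    show "finite P" "finite (\<Union>P)"
      using \<open>\<Union>P = X\<close> assms(1) by (simp_all add: P_def)
    show "\<And>c. c \<in> P \<Longrightarrow> card c = 2"
      using assms(4) by (fastforce simp: P_def card_insert_if)
    show "\<And>c1 c2. c1 \<in> P \<Longrightarrow> c2 \<in> P \<Longrightarrow> c1 \<noteq> c2 \<Longrightarrow> c1 \<inter> c2 = {}"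
      using assms(3) by (auto simp: P_def) metis+
  qed
  ultimately show ?thesis
    by (metis dvd_triv_left)
qed

lemma norm_fixed_by_frobenius:
  fixes u :: "'a :: {field,finite}"
  assumes "card (UNIV :: 'a set) = q\<^sup>2"
  shows "(u ^ (q + 1)) ^ q = u ^ (q + 1)"
proof -
  have "(u ^ (q + 1)) ^ q = u ^ (q * q) * u ^ q"
    by (simp add: power_mult [symmetric] power_add [symmetric] algebra_simps)
  also have "u ^ (q * q) = u"
    using power_card_eq_self[of u] assms by (simp add: power2_eq_square)
  finally show ?thesis
    by simp
qed

lemma norm_root_of_quadratic:
  fixes u b :: "'a :: {field,finite}"
  assumes "q = CHAR('a) ^ m" and "card (UNIV :: 'a set) = q\<^sup>2"
    and "2 * u ^ (q + 1) + u\<^sup>2 = b"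
  shows "3 * (u ^ (q + 1))\<^sup>2 - 2 * (b + b ^ q) * u ^ (q + 1) + b ^ (q + 1) = 0"
proof -
  define N where "N = u ^ (q + 1)"
  have frob: "(x + y) ^ q = x ^ q + y ^ q" for x y :: 'a
    using freshmans_dream' prime_CHAR_finite_field assms(1) by blast
  have u2: "u\<^sup>2 = b - 2 * N"
    using assms(3) by (simp add: N_def algebra_simps)
  have "N ^ q = N"
    unfolding N_def using assms(2) by (rule norm_fixed_by_frobenius)
  moreover have "(2 :: 'a) ^ q = 2"
    using frob[of 1 1] by simp
  ultimately have u2q: "(u\<^sup>2) ^ q = b ^ q - 2 * N"
    using frob[of "b - 2 * N" "2 * N"] u2 by (simp add: power_mult_distrib)
  have "N\<^sup>2 = (u\<^sup>2) ^ q * u\<^sup>2"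
    by (simp add: N_def power_mult [symmetric] power_add [symmetric] algebra_simps)
  also have "\<dots> = (b ^ q - 2 * N) * (b - 2 * N)"
    unfolding u2q by (simp only: u2)
  finally show ?thesis
    by (simp add: N_def algebra_simps power2_eq_square)
qed

lemma delta_le_4:
  fixes b :: "'a :: {field,finite}"
  assumes "q = CHAR('a) ^ m" and "card (UNIV :: 'a set) = q\<^sup>2"
    and "b \<noteq> 0"
  shows "delta q b \<le> 4"
proof -
  define R where "R = {N :: 'a. 3 * N\<^sup>2 + (- 2 * (b + b ^ q)) * N + b ^ (q + 1) = 0}"
  have "card R \<le> 2"
    unfolding R_def using assms(3) by (intro card_quadratic_roots_le_2) simp
  have "{u. 2 * u ^ (q + 1) + u\<^sup>2 = b} \<subseteq> (\<Union>N\<in>R. {u. u\<^sup>2 = b - 2 * N})"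
  proof
    fix u
    assume u: "u \<in> {u. 2 * u ^ (q + 1) + u\<^sup>2 = b}"
    then have "3 * (u ^ (q + 1))\<^sup>2 - 2 * (b + b ^ q) * u ^ (q + 1) + b ^ (q + 1) = 0"
      by (intro norm_root_of_quadratic[OF assms(1,2)]) simp
    then show "u \<in> (\<Union>N\<in>R. {u. u\<^sup>2 = b - 2 * N})"
      using u unfolding R_def by (intro UN_I[of "u ^ (q + 1)"]) (simp_all add: algebra_simps)
  qed
  then have "delta q b \<le> card (\<Union>N\<in>R. {u. u\<^sup>2 = b - 2 * N})"
    unfolding delta_def by (intro card_mono) simp_all
  also have "\<dots> \<le> (\<Sum>N\<in>R. card {u. u\<^sup>2 = b - 2 * N})"
    by (rule card_UN_le) simp
  also have "\<dots> \<le> (\<Sum>N\<in>R. 2)"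
    by (intro sum_mono card_square_roots_le_2)
  also have "\<dots> \<le> 4"
    using \<open>card R \<le> 2\<close> by simp
  finally show ?thesis .
qed

lemma even_delta:
  fixes b :: "'a :: {field,finite}"
  assumes "(2 :: 'a) \<noteq> 0" and "odd q" and "b \<noteq> 0"
  shows "even (delta q b)"
  unfolding delta_def
proof (rule even_card_if_fixpoint_free_involution[where h = uminus])
  fix u
  assume u: "u \<in> {u :: 'a. 2 * u ^ (q + 1) + u\<^sup>2 = b}"
  then show "- u \<in> {u :: 'a. 2 * u ^ (q + 1) + u\<^sup>2 = b}"
    using \<open>odd q\<close> by simp
  have "u \<noteq> 0"
    using u \<open>b \<noteq> 0\<close> by auto
  then show "- u \<noteq> u"
    using \<open>(2 :: 'a) \<noteq> 0\<close> by (metis add_eq_0_iff2 mult_2 mult_eq_0_iff)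
qed simp_all

lemma two_neq_zero_if_odd_CHAR:
  assumes "odd CHAR('a :: {semiring_1,zero_neq_one})"
  shows "(2 :: 'a) \<noteq> 0"
proof
  assume "(2 :: 'a) = 0"
  then have "CHAR('a) dvd 2"
    by (metis of_nat_eq_0_iff_char_dvd of_nat_numeral)
  moreover have "CHAR('a) \<noteq> 1"
    by simp
  ultimately have "CHAR('a) = 2"
    using two_is_prime_nat prime_nat_iff by blast
  with assms show False
    by simp
qed

theorem lemma8:
  fixes p m q :: nat and b :: "'a::{field,finite}"
  assumes "prime p" and "odd p" and "m \<ge> 1" and "q = p ^ m"
    and "card (UNIV :: 'a set) = q ^ 2"
    and "b \<noteq> 0"
  shows "even (delta q b) \<and> delta q b \<le> 4"
proof
  have "card (UNIV :: 'a set) = p ^ (m * 2)"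
    using assms(4,5) by (simp add: power_mult)
  with assms(1) have char: "CHAR('a) = p"
    by (rule CHAR_eq_if_card_eq_prime_power)
  then have "(2 :: 'a) \<noteq> 0"
    using assms(2) by (intro two_neq_zero_if_odd_CHAR) simp
  then show "even (delta q b)"
    using assms(2,4,6) by (intro even_delta) simp_all
  show "delta q b \<le> 4"
    using assms(4,5,6) char by (intro delta_le_4) simp_all
qed

end
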